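(* Let $X,Y$ be random variables, let $F_{Y\mid X}(y\mid x)$ denote a (regular) conditional distribution function of $Y$ given $X=x$, and for a non-decreasing Borel function $h$ let $h^*(x)=\mathbb E[h(Y)\mid X=x]=\int h(y)\,F_{Y\mid X}(\mathrm dy\mid x)$ (considered for those $h$ for which this is finite for every $x$). The following are equivalent: (i) for all non-decreasing Borel functions $g$ and $h$, the functions $g$ and $h^*$ are weakly comonotonic with respect to all product measures $\varrho_1\times\varrho_2$ of Borel probability measures on $\mathbb R$, i.e. $\iint_{\mathbb R^2}(g(x)-g(x'))(h^*(x)-h^*(x'))\,\varrho_1(\mathrm dx)\varrho_2(\mathrm dx')\ge0$ whenever this integral exists (in particular $(g(x)-g(x'))(h^*(x)-h^*(x'))\ge0$ for all $x,x'$); (ii) $Y$ is positively regression dependent on $X$, i.e. for every $y\in\mathbb R$ the function $x\mapsto F_{Y\mid X}(y\mid x)$ is non-increasing. *)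

theory Defs
  imports "HOL-Probability.Probability"
begin

definition regular_cond_distr ::
  "'a measure \<Rightarrow> ('a \<Rightarrow> real) \<Rightarrow> ('a \<Rightarrow> real) \<Rightarrow> (real \<Rightarrow> real measure) \<Rightarrow> bool" where
  "regular_cond_distr M X Y K \<longleftrightarrow>
     (\<forall>x. prob_space (K x) \<and> sets (K x) = sets borel) \<and>
     (\<forall>B \<in> sets borel. (\<lambda>x. measure (K x) B) \<in> borel_measurable borel) \<and>
     (\<forall>A \<in> sets borel. \<forall>B \<in> sets borel.
        measure M {\<omega> \<in> space M. X \<omega> \<in> A \<and> Y \<omega> \<in> B}
        = (\<integral>\<omega>. indicator A (X \<omega>) * measure (K (X \<omega>)) B \<partial>M))"

definition cond_cdf :: "(real \<Rightarrow> real measure) \<Rightarrow> real \<Rightarrow> real \<Rightarrow> real" where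
  "cond_cdf K y x = measure (K x) {..y}"

definition cond_exp_fun :: "(real \<Rightarrow> real measure) \<Rightarrow> (real \<Rightarrow> real) \<Rightarrow> real \<Rightarrow> real" where
  "cond_exp_fun K h x = (\<integral>y. h y \<partial>(K x))"

definition borel_prob :: "real measure \<Rightarrow> bool" where
  "borel_prob \<rho> \<longleftrightarrow> prob_space \<rho> \<and> sets \<rho> = sets borel"

definition weakly_comonotonic ::
  "(real \<Rightarrow> real) \<Rightarrow> (real \<Rightarrow> real) \<Rightarrow> real measure \<Rightarrow> real measure \<Rightarrow> bool" where
  "weakly_comonotonic g f \<rho>1 \<rho>2 \<longleftrightarrow>
     (let u = (\<lambda>(x, x'). (g x - g x') * (f x - f x')) in
      integrable (\<rho>1 \<Otimes>\<^sub>M \<rho>2) u \<longrightarrow> (\<integral>z. u z \<partial>(\<rho>1 \<Otimes>\<^sub>M \<rho>2)) \<ge> 0)"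

definition pos_regr_dep :: "(real \<Rightarrow> real measure) \<Rightarrow> bool" where
  "pos_regr_dep K \<longleftrightarrow> (\<forall>y. antimono (cond_cdf K y))"

end

theory Submission
  imports Defs
begin

(*
  (ii) implies (i): for x <= x', positive regression dependence says that K x is stochastically
  smaller than K x'. Superlevel sets of a non-decreasing h are up-sets, which K x' charges at
  least as much as K x, so the layer-cake formula, applied to the positive and negative parts
  of h, shows that h* is non-decreasing. Then (g x - g x') (h* x - h* x') is non-negative
  pointwise, and so is each of its integrals.

  (i) implies (ii): take Dirac measures at x < x', g = 1_(x,oo) and h = 1_(y,oo). Then
  h* = 1 - F(y|.), and the comonotonicity integral collapses to F(y|x) - F(y|x') >= 0.
*)

lemma down_closed_real_cases:
  fixes L :: "real set"
  assumes down: "\<And>x y. x \<in> L \<Longrightarrow> y \<le> x \<Longrightarrow> y \<in> L"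
  obtains "L = {}" | "L = UNIV" | a where "L = {..a}" | a where "L = {..<a}"
proof (cases "L = {} \<or> L = UNIV")
  case False
  then obtain z where "z \<notin> L" and "L \<noteq> {}" by auto
  then have "bdd_above L"
    using down by (meson bdd_aboveI linorder_le_cases)
  define a where "a = Sup L"
  have le_a: "x \<le> a" if "x \<in> L" for x
    unfolding a_def using that \<open>bdd_above L\<close> by (rule cSup_upper)
  have below_a: "x \<in> L" if "x < a" for x
    using less_cSupD[OF \<open>L \<noteq> {}\<close>] that down unfolding a_def by (meson less_imp_le)
  show thesis
  proof (cases "a \<in> L")
    case True
    then have "L = {..a}" using le_a down by auto
    then show thesis by (rule that(3))
  next
    case False
    then have "L = {..<a}" using le_a below_a by (auto simp: order.order_iff_strict)
    then show thesis by (rule that(4))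
  qed
qed (use that in blast)

lemma measure_down_closed_le_of_cdf_le:
  assumes "real_distribution \<mu>" "real_distribution \<nu>"
    and cdf_le: "\<And>y. cdf \<nu> y \<le> cdf \<mu> y"
    and down: "\<And>x y. x \<in> L \<Longrightarrow> y \<le> x \<Longrightarrow> y \<in> L"
  shows "measure \<nu> L \<le> measure \<mu> L"
proof -
  interpret \<mu>: real_distribution \<mu> by fact
  interpret \<nu>: real_distribution \<nu> by fact
  show ?thesis
  proof (rule down_closed_real_cases[OF down])
    assume "L = {}"
    then show ?thesis by simp
  next
    assume "L = UNIV"
    then show ?thesis using \<mu>.prob_space \<nu>.prob_space by simp
  next
    fix a assume "L = {..a}"
    then show ?thesis using cdf_le[of a] by (simp add: cdf_def)
  next
    fix a assume "L = {..<a}"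
    have "measure \<nu> {..<a} \<le> measure \<mu> {..<a}"
      by (rule tendsto_le[OF trivial_limit_at_left_real \<mu>.cdf_at_left \<nu>.cdf_at_left]) (simp add: cdf_le)
    then show ?thesis using \<open>L = {..<a}\<close> by simp
  qed
qed

lemma measure_up_closed_ge_of_cdf_le:
  assumes "real_distribution \<mu>" "real_distribution \<nu>"
    and "\<And>y. cdf \<nu> y \<le> cdf \<mu> y"
    and U: "U \<in> sets borel" and up: "\<And>x y. x \<in> U \<Longrightarrow> x \<le> y \<Longrightarrow> y \<in> U"
  shows "measure \<mu> U \<le> measure \<nu> U"
proof -
  interpret \<mu>: real_distribution \<mu> by fact
  interpret \<nu>: real_distribution \<nu> by fact
  have "measure \<nu> (- U) \<le> measure \<mu> (- U)"
    using assms(1-3) by (rule measure_down_closed_le_of_cdf_le) (use up in blast)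
  then show ?thesis
    using \<mu>.prob_compl[of U] \<nu>.prob_compl[of U] U by (simp add: Compl_eq_Diff_UNIV)
qed

lemma nn_integral_layer_cake:
  fixes f :: "'a \<Rightarrow> real"
  assumes "sigma_finite_measure M" and [measurable]: "f \<in> borel_measurable M"
  shows "(\<integral>\<^sup>+x. f x \<partial>M) = (\<integral>\<^sup>+t\<in>{0..}. emeasure M {x \<in> space M. t < f x} \<partial>lborel)"
proof -
  interpret pair_sigma_finite M lborel
    by (simp add: assms(1) lborel.sigma_finite_measure_axioms pair_sigma_finite.intro)
  have "ennreal (f x) = emeasure lborel {0..<f x}" for x
    by (cases "0 \<le> f x") (simp_all add: ennreal_neg)
  then have "(\<integral>\<^sup>+x. f x \<partial>M) = (\<integral>\<^sup>+x. (\<integral>\<^sup>+t. indicator {0..<f x} t \<partial>lborel) \<partial>M)"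
    by simp
  also have "\<dots> = (\<integral>\<^sup>+t. (\<integral>\<^sup>+x. indicator {0..<f x} t \<partial>M) \<partial>lborel)"
    by (rule Fubini'[symmetric]) (simp add: indicator_def)
  also have "\<dots> = (\<integral>\<^sup>+t\<in>{0..}. emeasure M {x \<in> space M. t < f x} \<partial>lborel)"
  proof (intro nn_integral_cong)
    fix t :: real
    have "(\<integral>\<^sup>+x. indicator {0..<f x} t \<partial>M) = (\<integral>\<^sup>+x. indicator {0..} t * indicator {x \<in> space M. t < f x} x \<partial>M)"
      by (intro nn_integral_cong) (auto simp: indicator_def)
    also have "\<dots> = indicator {0..} t * emeasure M {x \<in> space M. t < f x}"
      by (simp add: nn_integral_cmult_indicator)
    finally show "(\<integral>\<^sup>+x. indicator {0..<f x} t \<partial>M) = emeasure M {x \<in> space M. t < f x} * indicator {0..} t"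
      by (simp add: mult.commute)
  qed
  finally show ?thesis .
qed

lemma nn_integral_mono_of_superlevel_le:
  fixes f :: "'a \<Rightarrow> real"
  assumes "sigma_finite_measure M" "sigma_finite_measure N"
    and "f \<in> borel_measurable M" "f \<in> borel_measurable N"
    and superlevel_le: "\<And>t. emeasure M {x \<in> space M. t < f x} \<le> emeasure N {x \<in> space N. t < f x}"
  shows "(\<integral>\<^sup>+x. f x \<partial>M) \<le> (\<integral>\<^sup>+x. f x \<partial>N)"
  unfolding nn_integral_layer_cake[OF assms(1,3)] nn_integral_layer_cake[OF assms(2,4)]
  by (intro nn_integral_mono mult_right_mono superlevel_le) simp

lemma integral_mono_of_cdf_le:
  fixes h :: "real \<Rightarrow> real"
  assumes \<mu>: "real_distribution \<mu>" and \<nu>: "real_distribution \<nu>"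
    and cdf_le: "\<And>y. cdf \<nu> y \<le> cdf \<mu> y"
    and "mono h" "integrable \<mu> h" "integrable \<nu> h"
  shows "(\<integral>x. h x \<partial>\<mu>) \<le> (\<integral>x. h x \<partial>\<nu>)"
proof -
  interpret \<mu>: real_distribution \<mu> by fact
  interpret \<nu>: real_distribution \<nu> by fact
  have h[measurable]: "h \<in> borel_measurable borel"
    using \<open>mono h\<close> by (rule borel_measurable_mono)
  have pos: "(\<integral>\<^sup>+x. h x \<partial>\<mu>) \<le> (\<integral>\<^sup>+x. h x \<partial>\<nu>)"
  proof (rule nn_integral_mono_of_superlevel_le)
    fix t
    have "measure \<mu> {x. t < h x} \<le> measure \<nu> {x. t < h x}"
      using \<mu> \<nu> cdf_le by (rule measure_up_closed_ge_of_cdf_le)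
        (auto intro: less_le_trans monoD[OF \<open>mono h\<close>])
    then show "emeasure \<mu> {x \<in> space \<mu>. t < h x} \<le> emeasure \<nu> {x \<in> space \<nu>. t < h x}"
      by (simp add: \<mu>.emeasure_eq_measure \<nu>.emeasure_eq_measure)
  qed (simp_all add: prob_space_imp_sigma_finite \<mu>.prob_space_axioms \<nu>.prob_space_axioms)
  have neg: "(\<integral>\<^sup>+x. - h x \<partial>\<nu>) \<le> (\<integral>\<^sup>+x. - h x \<partial>\<mu>)"
  proof (rule nn_integral_mono_of_superlevel_le)
    fix t
    have "measure \<nu> {x. t < - h x} \<le> measure \<mu> {x. t < - h x}"
      using \<mu> \<nu> cdf_le by (rule measure_down_closed_le_of_cdf_le)
        (simp, meson less_le_trans monoD[OF \<open>mono h\<close>] neg_le_iff_le)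
    then show "emeasure \<nu> {x \<in> space \<nu>. t < - h x} \<le> emeasure \<mu> {x \<in> space \<mu>. t < - h x}"
      by (simp add: \<mu>.emeasure_eq_measure \<nu>.emeasure_eq_measure)
  qed (simp_all add: prob_space_imp_sigma_finite \<mu>.prob_space_axioms \<nu>.prob_space_axioms)
  show ?thesis
    unfolding real_lebesgue_integral_def[OF \<open>integrable \<mu> h\<close>] real_lebesgue_integral_def[OF \<open>integrable \<nu> h\<close>]
    using enn2real_mono[OF pos] enn2real_mono[OF neg]
      integrableD(2)[OF \<open>integrable \<nu> h\<close>] integrableD(3)[OF \<open>integrable \<mu> h\<close>]
    by (simp add: less_top)
qed

lemma return_pair_measure:
  assumes "x \<in> space M" "y \<in> space N"
  shows "return M x \<Otimes>\<^sub>M return N y = return (M \<Otimes>\<^sub>M N) (x, y)"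
proof (rule pair_measure_eqI)
  show "sigma_finite_measure (return M x)" "sigma_finite_measure (return N y)"
    using assms by (simp_all add: prob_space_imp_sigma_finite prob_space_return)
  show "sets (return M x \<Otimes>\<^sub>M return N y) = sets (return (M \<Otimes>\<^sub>M N) (x, y))"
    unfolding sets_return by (rule sets_pair_measure_cong) (rule sets_return)+
  fix A B
  assume "A \<in> sets (return M x)" "B \<in> sets (return N y)"
  then have "A \<in> sets M" "B \<in> sets N" "A \<times> B \<in> sets (M \<Otimes>\<^sub>M N)"
    by auto
  then show "emeasure (return M x) A * emeasure (return N y) B = emeasure (return (M \<Otimes>\<^sub>M N) (x, y)) (A \<times> B)"
    by (simp only: emeasure_return) (simp add: indicator_times)
qed

lemma weakly_comonotonic_return_iff:
  assumes [measurable]: "g \<in> borel_measurable borel" "f \<in> borel_measurable borel"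
  shows "weakly_comonotonic g f (return borel x) (return borel x') \<longleftrightarrow> 0 \<le> (g x - g x') * (f x - f x')"
proof -
  define u where "u = (\<lambda>(x, x'). (g x - g x') * (f x - f x'))"
  have [measurable]: "u \<in> borel_measurable (borel \<Otimes>\<^sub>M borel)"
    unfolding u_def by measurable
  then have u_measurable: "u \<in> borel_measurable (return (borel \<Otimes>\<^sub>M borel) (x, x'))"
    by (simp add: measurable_cong_sets[OF sets_return refl])
  have "return borel x \<Otimes>\<^sub>M return borel x' = return (borel \<Otimes>\<^sub>M borel) (x, x')"
    by (rule return_pair_measure) simp_all
  moreover have "(\<integral>z. u z \<partial>return (borel \<Otimes>\<^sub>M borel) (x, x')) = u (x, x')"
    by (rule integral_return) (simp_all add: u_measurable space_pair_measure)
  moreover have "integrable (return (borel \<Otimes>\<^sub>M borel) (x, x')) u"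
    unfolding integrable_iff_bounded
    by (subst nn_integral_return) (simp_all add: u_measurable space_pair_measure)
  ultimately show ?thesis
    unfolding weakly_comonotonic_def Let_def u_def by simp
qed

lemma weakly_comonotonic_if_mono:
  assumes "mono g" "mono f"
  shows "weakly_comonotonic g f \<rho>1 \<rho>2"
proof -
  have "0 \<le> (g x - g x') * (f x - f x')" for x x'
  proof (cases "x \<le> x'")
    case True
    then have "g x \<le> g x'" "f x \<le> f x'"
      using assms by (simp_all add: monoD)
    then show ?thesis by (simp add: mult_nonpos_nonpos)
  next
    case False
    then have "g x' \<le> g x" "f x' \<le> f x"
      using assms by (simp_all add: monoD)
    then show ?thesis by simp
  qed
  then show ?thesis
    unfolding weakly_comonotonic_def Let_def by (auto intro!: integral_nonneg split: prod.splits)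
qed

lemma mono_cond_exp_fun_if_pos_regr_dep:
  assumes "\<And>x. real_distribution (K x)" and "pos_regr_dep K"
    and "mono h" and "\<And>x. integrable (K x) h"
  shows "mono (cond_exp_fun K h)"
proof (rule monoI)
  fix a b :: real
  assume "a \<le> b"
  then have "cdf (K b) y \<le> cdf (K a) y" for y
    using \<open>pos_regr_dep K\<close> unfolding pos_regr_dep_def cond_cdf_def cdf_def by (auto dest: antimonoD)
  then show "cond_exp_fun K h a \<le> cond_exp_fun K h b"
    unfolding cond_exp_fun_def by (intro integral_mono_of_cdf_le assms)
qed

lemma cond_exp_fun_indicator_greaterThan:
  assumes "real_distribution (K x)"
  shows "cond_exp_fun K (indicator {y<..}) x = 1 - cond_cdf K y x"
proof -
  interpret real_distribution "K x" by fact
  have "{y<..} = space (K x) - {..y}"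
    by auto
  then show ?thesis
    using prob_compl[of "{..y}"] unfolding cond_exp_fun_def cond_cdf_def by simp
qed

lemma antimono_cond_cdf_if_weakly_comonotonic:
  assumes "\<And>x. real_distribution (K x)" and "cond_cdf K y \<in> borel_measurable borel"
    and "\<And>x x'. weakly_comonotonic (indicator {x<..}) (cond_exp_fun K (indicator {y<..}))
                 (return borel x) (return borel x')"
  shows "antimono (cond_cdf K y)"
proof (rule antimonoI)
  fix x x' :: real
  assume "x \<le> x'"
  have "cond_exp_fun K (indicator {y<..}) = (\<lambda>z. 1 - cond_cdf K y z)"
    using cond_exp_fun_indicator_greaterThan assms(1) by blast
  then have "0 \<le> (indicator {x<..} x - indicator {x<..} x') * (cond_cdf K y x' - cond_cdf K y x)"
    using assms(3)[of x x'] assms(2) by (simp add: weakly_comonotonic_return_iff)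
  with \<open>x \<le> x'\<close> show "cond_cdf K y x' \<le> cond_cdf K y x"
    by (cases "x = x'") (simp_all add: mult_le_0_iff)
qed

theorem proposition4p4:
  fixes M :: "'a measure" and X Y :: "'a \<Rightarrow> real" and K :: "real \<Rightarrow> real measure"
  assumes "prob_space M"
    and "X \<in> borel_measurable M" and "Y \<in> borel_measurable M"
    and "regular_cond_distr M X Y K"
  shows "(\<forall>g h. mono g \<and> g \<in> borel_measurable borel \<and>
                mono h \<and> h \<in> borel_measurable borel \<and>
                (\<forall>x. integrable (K x) h) \<longrightarrow>
             (\<forall>\<rho>1 \<rho>2. borel_prob \<rho>1 \<and> borel_prob \<rho>2 \<longrightarrow>
                weakly_comonotonic g (cond_exp_fun K h) \<rho>1 \<rho>2))
         \<longleftrightarrow> pos_regr_dep K"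
proof -
  have K: "\<And>x. real_distribution (K x)" and cond_cdf_measurable: "\<And>y. cond_cdf K y \<in> borel_measurable borel"
    using assms(4) unfolding regular_cond_distr_def real_distribution_def real_distribution_axioms_def cond_cdf_def
    by auto
  have mono_indicator: "mono (indicator {a<..} :: real \<Rightarrow> real)" for a
    by (auto simp: mono_def indicator_def)
  have integrable_indicator: "integrable (K x) (indicator {a<..} :: real \<Rightarrow> real)" for a x
  proof -
    interpret real_distribution "K x" by (rule K)
    show ?thesis by (simp add: emeasure_eq_measure)
  qed
  show ?thesis (is "?comonotonic \<longleftrightarrow> _")
  proof
    assume ?comonotonic
    then have "weakly_comonotonic (indicator {x<..}) (cond_exp_fun K (indicator {y<..}))
                 (return borel x) (return borel x')" for x x' y
      using mono_indicator integrable_indicator by (simp add: borel_prob_def prob_space_return)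
    then show "pos_regr_dep K"
      unfolding pos_regr_dep_def using K cond_cdf_measurable antimono_cond_cdf_if_weakly_comonotonic by blast
  next
    assume "pos_regr_dep K"
    then show ?comonotonic
      using K mono_cond_exp_fun_if_pos_regr_dep weakly_comonotonic_if_mono by blast
  qed
qed

end
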